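(* Let $A$ be an algebra with a differential calculus $(\Omega^1_A,\mathrm{d})$ and a Riemannian structure $(g,(\nabla,\sigma))$, let $I\subset A$ be a two-sided ideal such that $B=A/I$ is a (metrically co-orientable) noncommutative hypersurface with normalized central $1$-form $\nu\in\Omega^1_A$, and let $\Pi:q_!(\Omega^1_A)\to q_!(\Omega^1_A)$, $[\omega]\mapsto[\omega-g^{-1}(\omega\otimes_A\nu)\,\nu]$. Then: (i) $\Pi([\nu])=0$; (ii) $\Pi^2=\Pi$; (iii) $\Pi$ induces a well-defined $B$-bimodule map $\Pi:\Omega^1_B\to q_!(\Omega^1_A)$ which is a section of the quotient map $q_!(\Omega^1_A)\twoheadrightarrow\Omega^1_B$; in particular it defines an isomorphism $\Omega^1_B\cong\Pi\,q_!(\Omega^1_A)$.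
   Context: All algebras are associative unital over $\mathbb{C}$. A differential calculus on $A$ is a pair $(\Omega^1_A,\mathrm{d})$, $\Omega^1_A$ an $A$-bimodule, $\mathrm{d}:A\to\Omega^1_A$ linear, satisfying the Leibniz rule and $\Omega^1_A=A\,\mathrm{d}(A)$. A (generalized) metric is an $A$-bimodule map $g:A\to\Omega^1_A\otimes_A\Omega^1_A$, $g(1)=\sum_\alpha g^\alpha\otimes_Ag_\alpha$, with an $A$-bimodule map $g^{-1}:\Omega^1_A\otimes_A\Omega^1_A\to A$ satisfying $\sum_\alpha g^{-1}(\omega\otimes_Ag^\alpha)g_\alpha=\omega=\sum_\alpha g^\alpha g^{-1}(g_\alpha\otimes_A\omega)$; a Riemannian structure is such a metric together with a bimodule connection $(\nabla,\sigma)$ on $\Omega^1_A$ satisfying $g^{-1}\circ\sigma=g^{-1}$ and metric compatibility (only $g^{-1}$ is used here). Let $B=A/I$ with quotient map $q$ and classes $[\cdot]$. For an $A$-bimodule $V$, $q_!(V):=B\otimes_AV\otimes_AB\cong V/(IV+VI)$, where $IV$ (resp. $VI$) is the set of elements $av$ (resp. $va$) with $a\in I$, $v\in V$. Let $N^1_B:=B[\mathrm{d}I]B\subseteq q_!(\Omega^1_A)$ be the $B$-subbimodule generated by the classes $[\mathrm{d}a]$, $a\in I$, and $\Omega^1_B:=q_!(\Omega^1_A)/N^1_B$ with $\mathrm{d}_B[a]=[\mathrm{d}a]$; this is a differential calculus on $B$. $B$ is called a (metrically co-orientable) noncommutative hypersurface if $N^1_B$ admits a one-element basis $[\nu]$ (it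 is free of rank one generated by $[\nu]$) with $\nu\in\Omega^1_A$ central ($a\nu=\nu a$ for all $a\in A$) and $[g^{-1}(\nu\otimes_A\nu)]=1\in B$. The map $\omega\mapsto\omega-g^{-1}(\omega\otimes_A\nu)\nu$ is an $A$-bimodule endomorphism of $\Omega^1_A$ and induces the $B$-bimodule endomorphism $\Pi$ of $q_!(\Omega^1_A)$. *)

theory Defs
  imports Complex_Main
begin

text \<open>A unital associative C-algebra is a ring 'a with a central unital ring
  homomorphism sc from the complex numbers (the scalars sc c = c 1).\<close>
definition cplx_algebra :: "(complex \<Rightarrow> 'a::ring_1) \<Rightarrow> bool" where
  "cplx_algebra sc \<longleftrightarrow>
     (\<forall>c e. sc (c + e) = sc c + sc e) \<and> (\<forall>c e. sc (c * e) = sc c * sc e) \<and> sc 1 = 1 \<and>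
     (\<forall>c a. sc c * a = a * sc c)"

definition bimodule ::
  "(complex \<Rightarrow> 'a::ring_1) \<Rightarrow> ('a \<Rightarrow> 'm::ab_group_add \<Rightarrow> 'm) \<Rightarrow> ('m \<Rightarrow> 'a \<Rightarrow> 'm) \<Rightarrow> bool" where
  "bimodule sc lact ract \<longleftrightarrow>
     (\<forall>a x y. lact a (x + y) = lact a x + lact a y) \<and>
     (\<forall>a b x. lact (a + b) x = lact a x + lact b x) \<and>
     (\<forall>a b x. lact (a * b) x = lact a (lact b x)) \<and>
     (\<forall>x. lact 1 x = x) \<and>
     (\<forall>a x y. ract (x + y) a = ract x a + ract y a) \<and>
     (\<forall>a b x. ract x (a + b) = ract x a + ract x b) \<and>
     (\<forall>a b x. ract x (a * b) = ract (ract x a) b) \<and>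
     (\<forall>x. ract x 1 = x) \<and>
     (\<forall>a b x. lact a (ract x b) = ract (lact a x) b) \<and>
     (\<forall>c x. lact (sc c) x = ract x (sc c))"

definition two_sided_ideal :: "'a::ring_1 set \<Rightarrow> bool" where
  "two_sided_ideal I \<longleftrightarrow> 0 \<in> I \<and> (\<forall>x\<in>I. \<forall>y\<in>I. x + y \<in> I) \<and> (\<forall>x\<in>I. - x \<in> I) \<and>
     (\<forall>a x. x \<in> I \<longrightarrow> a * x \<in> I \<and> x * a \<in> I)"

definition diff_calculus ::
  "(complex \<Rightarrow> 'a::ring_1) \<Rightarrow> ('a \<Rightarrow> 'm::ab_group_add \<Rightarrow> 'm) \<Rightarrow> ('m \<Rightarrow> 'a \<Rightarrow> 'm) \<Rightarrow> ('a \<Rightarrow> 'm) \<Rightarrow> bool" where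
  "diff_calculus sc lact ract d \<longleftrightarrow>
     bimodule sc lact ract \<and>
     (\<forall>a b. d (a + b) = d a + d b) \<and>
     (\<forall>c a. d (sc c * a) = lact (sc c) (d a)) \<and>
     (\<forall>a b. d (a * b) = ract (d a) b + lact a (d b)) \<and>
     (\<forall>w. \<exists>ps :: ('a \<times> 'a) list. w = sum_list (map (\<lambda>(a, b). lact a (d b)) ps))"

text \<open>Elements of Omega (x)_A Omega are represented by finite formal sums (lists of pairs);
  two formal sums represent the same element iff their difference (as an element of the free
  abelian group on pairs) lies in the subgroup generated by the bilinearity and A-balancing
  relations.  (C-balancing is included since C acts through the central copy sc C in A.)\<close>

definition delta :: "'x \<Rightarrow> 'x \<Rightarrow> int" where
  "delta q = (\<lambda>p. if p = q then 1 else 0)"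

inductive_set tens_rel ::
  "('a::ring_1 \<Rightarrow> 'm::ab_group_add \<Rightarrow> 'm) \<Rightarrow> ('m \<Rightarrow> 'a \<Rightarrow> 'm) \<Rightarrow> ('m \<times> 'm \<Rightarrow> int) set"
  for lact ract where
  zero: "(\<lambda>_. 0) \<in> tens_rel lact ract"
| add: "f \<in> tens_rel lact ract \<Longrightarrow> h \<in> tens_rel lact ract \<Longrightarrow> (\<lambda>p. f p + h p) \<in> tens_rel lact ract"
| neg: "f \<in> tens_rel lact ract \<Longrightarrow> (\<lambda>p. - f p) \<in> tens_rel lact ract"
| addl: "(\<lambda>p. delta (x + x', y) p - delta (x, y) p - delta (x', y) p) \<in> tens_rel lact ract"
| addr: "(\<lambda>p. delta (x, y + y') p - delta (x, y) p - delta (x, y') p) \<in> tens_rel lact ract"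
| bal: "(\<lambda>p. delta (ract x a, y) p - delta (x, lact a y) p) \<in> tens_rel lact ract"

definition tensor_eq ::
  "('a::ring_1 \<Rightarrow> 'm::ab_group_add \<Rightarrow> 'm) \<Rightarrow> ('m \<Rightarrow> 'a \<Rightarrow> 'm) \<Rightarrow> ('m \<times> 'm) list \<Rightarrow> ('m \<times> 'm) list \<Rightarrow> bool" where
  "tensor_eq lact ract l1 l2 \<longleftrightarrow>
     (\<lambda>p. int (count_list l1 p) - int (count_list l2 p)) \<in> tens_rel lact ract"

definition tlmul :: "('a \<Rightarrow> 'm \<Rightarrow> 'm) \<Rightarrow> 'a \<Rightarrow> ('m \<times> 'm) list \<Rightarrow> ('m \<times> 'm) list" where
  "tlmul lact a l = map (\<lambda>(x, y). (lact a x, y)) l"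

definition trmul :: "('m \<Rightarrow> 'a \<Rightarrow> 'm) \<Rightarrow> ('m \<times> 'm) list \<Rightarrow> 'a \<Rightarrow> ('m \<times> 'm) list" where
  "trmul ract l a = map (\<lambda>(x, y). (x, ract y a)) l"

text \<open>An A-bimodule map Omega (x)_A Omega -> A, given (universal property of the tensor
  product) by its values G x y = g^{-1}(x (x) y) on simple tensors.\<close>
definition bimod_pairing ::
  "('a::ring_1 \<Rightarrow> 'm::ab_group_add \<Rightarrow> 'm) \<Rightarrow> ('m \<Rightarrow> 'a \<Rightarrow> 'm) \<Rightarrow> ('m \<Rightarrow> 'm \<Rightarrow> 'a) \<Rightarrow> bool" where
  "bimod_pairing lact ract G \<longleftrightarrow>
     (\<forall>x x' y. G (x + x') y = G x y + G x' y) \<and>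
     (\<forall>x y y'. G x (y + y') = G x y + G x y') \<and>
     (\<forall>x a y. G (ract x a) y = G x (lact a y)) \<and>
     (\<forall>a x y. G (lact a x) y = a * G x y) \<and>
     (\<forall>x y a. G x (ract y a) = G x y * a)"

definition gsum :: "('m \<Rightarrow> 'm \<Rightarrow> 'a::ring_1) \<Rightarrow> ('m \<times> 'm) list \<Rightarrow> 'a" where
  "gsum G l = sum_list (map (\<lambda>(x, y). G x y) l)"

text \<open>Generalized metric: g(1) = sum of gs (a formal sum), g a bimodule map A -> Omega (x) Omega
  (i.e. a g(1) = g(1) a in the tensor product), with inverse bimodule map g^{-1} (given by G).\<close>
definition gen_metric ::
  "('a::ring_1 \<Rightarrow> 'm::ab_group_add \<Rightarrow> 'm) \<Rightarrow> ('m \<Rightarrow> 'a \<Rightarrow> 'm) \<Rightarrow> ('m \<times> 'm) list \<Rightarrow> ('m \<Rightarrow> 'm \<Rightarrow> 'a) \<Rightarrow> bool" where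
  "gen_metric lact ract gs G \<longleftrightarrow>
     bimod_pairing lact ract G \<and>
     (\<forall>a. tensor_eq lact ract (tlmul lact a gs) (trmul ract gs a)) \<and>
     (\<forall>w. sum_list (map (\<lambda>(x, y). lact (G w x) y) gs) = w) \<and>
     (\<forall>w. sum_list (map (\<lambda>(x, y). ract x (G y w)) gs) = w)"

text \<open>Bimodule connection (nabla, sigma) on Omega; nabla w and sigma x y are formal sums
  representing elements of Omega (x)_A Omega, sigma being given on simple tensors.\<close>
definition bimod_connection ::
  "(complex \<Rightarrow> 'a::ring_1) \<Rightarrow> ('a \<Rightarrow> 'm::ab_group_add \<Rightarrow> 'm) \<Rightarrow> ('m \<Rightarrow> 'a \<Rightarrow> 'm) \<Rightarrow> ('a \<Rightarrow> 'm)
   \<Rightarrow> ('m \<Rightarrow> ('m \<times> 'm) list) \<Rightarrow> ('m \<Rightarrow> 'm \<Rightarrow> ('m \<times> 'm) list) \<Rightarrow> bool" where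
  "bimod_connection sc lact ract d nabla sigma \<longleftrightarrow>
     (\<forall>x x' y. tensor_eq lact ract (sigma (x + x') y) (sigma x y @ sigma x' y)) \<and>
     (\<forall>x y y'. tensor_eq lact ract (sigma x (y + y')) (sigma x y @ sigma x y')) \<and>
     (\<forall>x a y. tensor_eq lact ract (sigma (ract x a) y) (sigma x (lact a y))) \<and>
     (\<forall>a x y. tensor_eq lact ract (sigma (lact a x) y) (tlmul lact a (sigma x y))) \<and>
     (\<forall>x y a. tensor_eq lact ract (sigma x (ract y a)) (trmul ract (sigma x y) a)) \<and>
     (\<forall>x y. tensor_eq lact ract (nabla (x + y)) (nabla x @ nabla y)) \<and>
     (\<forall>c x. tensor_eq lact ract (nabla (lact (sc c) x)) (tlmul lact (sc c) (nabla x))) \<and>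
     (\<forall>a x. tensor_eq lact ract (nabla (lact a x)) ((d a, x) # tlmul lact a (nabla x))) \<and>
     (\<forall>x a. tensor_eq lact ract (nabla (ract x a)) (trmul ract (nabla x) a @ sigma x (d a)))"

text \<open>Riemannian structure: metric (gs, G) and bimodule connection with g^{-1} o sigma = g^{-1}
  and metric compatibility d o g^{-1} = (id (x) g^{-1}) o (nabla (x) id + (sigma (x) id)(id (x) nabla)).\<close>
definition riemannian_structure ::
  "(complex \<Rightarrow> 'a::ring_1) \<Rightarrow> ('a \<Rightarrow> 'm::ab_group_add \<Rightarrow> 'm) \<Rightarrow> ('m \<Rightarrow> 'a \<Rightarrow> 'm) \<Rightarrow> ('a \<Rightarrow> 'm)
   \<Rightarrow> ('m \<times> 'm) list \<Rightarrow> ('m \<Rightarrow> 'm \<Rightarrow> 'a)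
   \<Rightarrow> ('m \<Rightarrow> ('m \<times> 'm) list) \<Rightarrow> ('m \<Rightarrow> 'm \<Rightarrow> ('m \<times> 'm) list) \<Rightarrow> bool" where
  "riemannian_structure sc lact ract d gs G nabla sigma \<longleftrightarrow>
     gen_metric lact ract gs G \<and>
     bimod_connection sc lact ract d nabla sigma \<and>
     (\<forall>x y. gsum G (sigma x y) = G x y) \<and>
     (\<forall>x y. d (G x y) =
        sum_list (map (\<lambda>(u, v). ract u (G v y)) (nabla x)) +
        sum_list (map (\<lambda>(y1, y2). sum_list (map (\<lambda>(p, q). ract p (G q y2)) (sigma x y1))) (nabla y)))"

text \<open>IV + VI for V = Omega: q_!(Omega) = Omega / qsub.\<close>
inductive_set qsub :: "'a::ring_1 set \<Rightarrow> ('a \<Rightarrow> 'm::ab_group_add \<Rightarrow> 'm) \<Rightarrow> ('m \<Rightarrow> 'a \<Rightarrow> 'm) \<Rightarrow> 'm set"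
  for I lact ract where
  zero: "0 \<in> qsub I lact ract"
| lft: "a \<in> I \<Longrightarrow> lact a x \<in> qsub I lact ract"
| rgt: "a \<in> I \<Longrightarrow> ract x a \<in> qsub I lact ract"
| add: "x \<in> qsub I lact ract \<Longrightarrow> y \<in> qsub I lact ract \<Longrightarrow> x + y \<in> qsub I lact ract"

text \<open>Preimage in Omega of N^1_B = B[dI]B; Omega^1_B = Omega / nsub.\<close>
inductive_set nsub ::
  "'a::ring_1 set \<Rightarrow> ('a \<Rightarrow> 'm::ab_group_add \<Rightarrow> 'm) \<Rightarrow> ('m \<Rightarrow> 'a \<Rightarrow> 'm) \<Rightarrow> ('a \<Rightarrow> 'm) \<Rightarrow> 'm set"
  for I lact ract d where
  base: "x \<in> qsub I lact ract \<Longrightarrow> x \<in> nsub I lact ract d"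
| gen: "a \<in> I \<Longrightarrow> lact b (ract (d a) c) \<in> nsub I lact ract d"
| add: "x \<in> nsub I lact ract d \<Longrightarrow> y \<in> nsub I lact ract d \<Longrightarrow> x + y \<in> nsub I lact ract d"

definition cls :: "'m::ab_group_add set \<Rightarrow> 'm \<Rightarrow> 'm set" where
  "cls S x = {y. y - x \<in> S}"

text \<open>Metrically co-orientable noncommutative hypersurface B = A/I with normalized central
  one-form nu: [nu] is a one-element basis of N^1_B, nu central, [g^{-1}(nu (x) nu)] = 1.\<close>
definition nc_hypersurface ::
  "'a::ring_1 set \<Rightarrow> ('a \<Rightarrow> 'm::ab_group_add \<Rightarrow> 'm) \<Rightarrow> ('m \<Rightarrow> 'a \<Rightarrow> 'm) \<Rightarrow> ('a \<Rightarrow> 'm)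
   \<Rightarrow> ('m \<Rightarrow> 'm \<Rightarrow> 'a) \<Rightarrow> 'm \<Rightarrow> bool" where
  "nc_hypersurface I lact ract d G \<nu> \<longleftrightarrow>
     (\<forall>a. lact a \<nu> = ract \<nu> a) \<and>
     \<nu> \<in> nsub I lact ract d \<and>
     (\<forall>w \<in> nsub I lact ract d. \<exists>a. w - lact a \<nu> \<in> qsub I lact ract) \<and>
     (\<forall>a. lact a \<nu> \<in> qsub I lact ract \<longrightarrow> a \<in> I) \<and>
     G \<nu> \<nu> - 1 \<in> I"

definition proj :: "('a \<Rightarrow> 'm::ab_group_add \<Rightarrow> 'm) \<Rightarrow> ('m \<Rightarrow> 'm \<Rightarrow> 'a) \<Rightarrow> 'm \<Rightarrow> 'm \<Rightarrow> 'm" where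
  "proj lact G \<nu> w = w - lact (G w \<nu>) \<nu>"

end

theory Submission
  imports Defs
begin

text \<open>Modulo IV + VI every element of N is a left multiple e \<nu> of the normal form, and the
  projection sends it to e (1 - g^-1(\<nu> \<otimes> \<nu>)) \<nu>, which vanishes modulo IV + VI because
  g^-1(\<nu> \<otimes> \<nu>) \<equiv> 1 mod I. Hence the projection kills N and descends
  to the quotient by N; since \<omega> - P \<omega> always lies in N, the descended map is a section of the
  quotient map, and the section property alone makes it injective.\<close>

lemma cls_eq_cls_iff:
  fixes S :: "'m::ab_group_add set"
  assumes "0 \<in> S" and "\<And>x y. x \<in> S \<Longrightarrow> y \<in> S \<Longrightarrow> x + y \<in> S" and "\<And>x. x \<in> S \<Longrightarrow> - x \<in> S"
  shows "cls S x = cls S y \<longleftrightarrow> x - y \<in> S"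
proof
  assume "cls S x = cls S y"
  moreover have "x \<in> cls S x" using assms(1) by (simp add: cls_def)
  ultimately show "x - y \<in> S" by (simp add: cls_def)
next
  assume xy: "x - y \<in> S"
  show "cls S x = cls S y"
  proof (intro set_eqI iffI)
    fix z assume "z \<in> cls S x"
    then have "z - x \<in> S" by (simp add: cls_def)
    then have "(z - x) + (x - y) \<in> S" using xy assms(2) by blast
    then show "z \<in> cls S y" by (simp add: cls_def)
  next
    fix z assume "z \<in> cls S y"
    then have "z - y \<in> S" by (simp add: cls_def)
    then have "(z - y) + - (x - y) \<in> S" using xy assms(2,3) by blast
    then show "z \<in> cls S x" by (simp add: cls_def)
  qed
qed

lemma ex_map_on_cls:
  assumes "\<And>x y. cls S x = cls S y \<Longrightarrow> cls T (f x) = cls T (f y)"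
  shows "\<exists>F. \<forall>x. F (cls S x) = cls T (f x)"
proof
  show "\<forall>x. (\<lambda>X. cls T (f (SOME x. X = cls S x))) (cls S x) = cls T (f x)"
    by (metis (mono_tags, lifting) assms someI)
qed

locale bimodule_quotient =
  fixes sc :: "complex \<Rightarrow> 'a::ring_1"
    and lact :: "'a \<Rightarrow> 'm::ab_group_add \<Rightarrow> 'm" and ract :: "'m \<Rightarrow> 'a \<Rightarrow> 'm"
    and I :: "'a set" and d :: "'a \<Rightarrow> 'm"
  assumes bimodule: "bimodule sc lact ract" and ideal: "two_sided_ideal I"
begin

abbreviation "K \<equiv> qsub I lact ract"
abbreviation "N \<equiv> nsub I lact ract d"

lemma additive_lact: "additive (lact a)"
  using bimodule by (simp add: additive_def bimodule_def)

lemma additive_lact_left: "additive (\<lambda>a. lact a x)"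
  using bimodule by (simp add: additive_def bimodule_def)

lemma additive_ract: "additive (\<lambda>x. ract x a)"
  using bimodule by (simp add: additive_def bimodule_def)

lemma additive_ract_right: "additive (ract x)"
  using bimodule by (simp add: additive_def bimodule_def)

lemma lact_mult: "lact (a * b) x = lact a (lact b x)"
  using bimodule by (simp add: bimodule_def)

lemma lact_one: "lact 1 x = x"
  using bimodule by (simp add: bimodule_def)

lemma ract_mult: "ract x (a * b) = ract (ract x a) b"
  using bimodule by (simp add: bimodule_def)

lemma lact_ract_commute: "lact a (ract x b) = ract (lact a x) b"
  using bimodule by (simp add: bimodule_def)

lemma ideal_add: "x \<in> I \<Longrightarrow> y \<in> I \<Longrightarrow> x + y \<in> I"
  and ideal_minus: "x \<in> I \<Longrightarrow> - x \<in> I"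
  and ideal_mult_left: "x \<in> I \<Longrightarrow> a * x \<in> I"
  and ideal_mult_right: "x \<in> I \<Longrightarrow> x * a \<in> I"
  and zero_in_ideal: "0 \<in> I"
  using ideal by (auto simp: two_sided_ideal_def)

lemma qsub_minus: "x \<in> K \<Longrightarrow> - x \<in> K"
proof (induction rule: qsub.induct)
  case (lft a x)
  then show ?case using additive.minus[OF additive_lact_left] ideal_minus qsub.lft by metis
next
  case (rgt a x)
  then show ?case using additive.minus[OF additive_ract_right] ideal_minus qsub.rgt by metis
next
  case (add x y)
  from add.IH have "- x + - y \<in> K" by (rule qsub.add)
  then show ?case by simp
qed (simp add: qsub.zero)

lemma qsub_diff: "x \<in> K \<Longrightarrow> y \<in> K \<Longrightarrow> x - y \<in> K"
  by (metis diff_conv_add_uminus qsub.add qsub_minus)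

lemma qsub_lact: "x \<in> K \<Longrightarrow> lact c x \<in> K"
proof (induction rule: qsub.induct)
  case (lft a x)
  then show ?case by (metis ideal_mult_left lact_mult qsub.lft)
next
  case (rgt a x)
  then show ?case by (metis lact_ract_commute qsub.rgt)
next
  case (add x y)
  then show ?case by (simp add: additive.add[OF additive_lact] qsub.add)
qed (simp add: additive.zero[OF additive_lact] qsub.zero)

lemma nsub_minus: "x \<in> N \<Longrightarrow> - x \<in> N"
proof (induction rule: nsub.induct)
  case (base x)
  then show ?case by (simp add: nsub.base qsub_minus)
next
  case (gen a b c)
  then show ?case by (metis additive.minus[OF additive_lact_left] nsub.gen)
next
  case (add x y)
  from add.IH have "- x + - y \<in> N" by (rule nsub.add)
  then show ?case by simp
qed

lemma nsub_diff: "x \<in> N \<Longrightarrow> y \<in> N \<Longrightarrow> x - y \<in> N"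
  by (metis diff_conv_add_uminus nsub.add nsub_minus)

lemma nsub_lact: "x \<in> N \<Longrightarrow> lact c x \<in> N"
proof (induction rule: nsub.induct)
  case (base x)
  then show ?case by (simp add: nsub.base qsub_lact)
next
  case (gen a b e)
  then show ?case by (metis lact_mult nsub.gen)
next
  case (add x y)
  then show ?case by (simp add: additive.add[OF additive_lact] nsub.add)
qed

lemma cls_qsub_eq_iff: "cls K x = cls K y \<longleftrightarrow> x - y \<in> K"
  by (rule cls_eq_cls_iff) (auto intro: qsub.zero qsub.add qsub_minus)

lemma cls_nsub_eq_iff: "cls N x = cls N y \<longleftrightarrow> x - y \<in> N"
  by (rule cls_eq_cls_iff) (auto intro: nsub.base qsub.zero nsub.add nsub_minus)

end

locale hypersurface_projection = bimodule_quotient +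
  fixes G and \<nu>
  assumes pairing: "bimod_pairing lact ract G"
    and hypersurface: "nc_hypersurface I lact ract d G \<nu>"
begin

abbreviation "P \<equiv> proj lact G \<nu>"

lemma additive_pairing_left: "additive (\<lambda>x. G x y)"
  using pairing by (simp add: additive_def bimod_pairing_def)

lemma pairing_lact_left: "G (lact a x) y = a * G x y"
  and pairing_ract_left: "G (ract x a) y = G x (lact a y)"
  and pairing_ract_right: "G x (ract y a) = G x y * a"
  using pairing by (simp_all add: bimod_pairing_def)

lemma nu_central: "lact a \<nu> = ract \<nu> a"
  and nu_nsub: "\<nu> \<in> N"
  and nsub_mod_qsub_multiple_nu: "w \<in> N \<Longrightarrow> \<exists>e. w - lact e \<nu> \<in> K"
  and pairing_nu_nu_mod_ideal: "G \<nu> \<nu> - 1 \<in> I"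
  using hypersurface by (auto simp: nc_hypersurface_def)

lemma additive_proj: "additive P"
  by (simp add: additive_def proj_def additive.add[OF additive_pairing_left]
      additive.add[OF additive_lact_left])

lemma proj_bimodule_map: "P (lact a (ract w b)) = lact a (ract (P w) b)"
proof -
  have "G (lact a (ract w b)) \<nu> = a * G w \<nu> * b"
    by (simp add: pairing_lact_left pairing_ract_left nu_central pairing_ract_right mult.assoc)
  then have "lact (G (lact a (ract w b)) \<nu>) \<nu> = lact a (ract (lact (G w \<nu>) \<nu>) b)"
    by (simp add: lact_mult nu_central ract_mult[symmetric] lact_ract_commute mult.assoc)
  then show ?thesis
    by (simp add: proj_def additive.diff[OF additive_lact] additive.diff[OF additive_ract])
qed

lemma pairing_qsub_nu: "x \<in> K \<Longrightarrow> G x \<nu> \<in> I"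
proof (induction rule: qsub.induct)
  case (lft a x)
  then show ?case by (simp add: pairing_lact_left ideal_mult_right)
next
  case (rgt a x)
  then show ?case
    by (simp add: pairing_ract_left nu_central pairing_ract_right ideal_mult_left)
next
  case (add x y)
  then show ?case by (simp add: additive.add[OF additive_pairing_left] ideal_add)
qed (simp add: additive.zero[OF additive_pairing_left] zero_in_ideal)

lemma proj_qsub: "x \<in> K \<Longrightarrow> P x \<in> K"
  unfolding proj_def using pairing_qsub_nu qsub.lft qsub_diff by blast

lemma proj_lact_nu: "P (lact e \<nu>) = lact (e * (1 - G \<nu> \<nu>)) \<nu>"
  by (simp add: proj_def pairing_lact_left additive.diff[OF additive_lact_left] algebra_simps)

lemma proj_lact_nu_qsub: "P (lact e \<nu>) \<in> K"
proof -
  have "1 - G \<nu> \<nu> \<in> I" using ideal_minus[OF pairing_nu_nu_mod_ideal] by simp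
  then show ?thesis unfolding proj_lact_nu by (simp add: ideal_mult_left qsub.lft)
qed

lemma proj_nsub: "x \<in> N \<Longrightarrow> P x \<in> K"
proof -
  assume "x \<in> N"
  then obtain e where e: "x - lact e \<nu> \<in> K" using nsub_mod_qsub_multiple_nu by blast
  have "P x = P (x - lact e \<nu>) + P (lact e \<nu>)" by (simp add: additive.add[OF additive_proj, symmetric])
  then show ?thesis using proj_qsub[OF e] proj_lact_nu_qsub qsub.add by metis
qed

lemma cls_proj_nu: "cls K (P \<nu>) = cls K 0"
  using proj_lact_nu_qsub[of 1] by (simp add: cls_qsub_eq_iff lact_one)

lemma cls_proj_proj: "cls K (P (P w)) = cls K (P w)"
proof -
  have "P (P w) - P w = P (P w - w)" by (simp add: additive.diff[OF additive_proj])
  also have "\<dots> = P (- lact (G w \<nu>) \<nu>)" by (simp add: proj_def)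
  finally have "P (P w) - P w = P (- lact (G w \<nu>) \<nu>)" .
  then show ?thesis
    by (metis additive.minus[OF additive_proj] cls_qsub_eq_iff proj_lact_nu_qsub qsub_minus)
qed

lemma diff_proj_nsub: "w - P w \<in> N"
  unfolding proj_def using nsub_lact[OF nu_nsub] by simp

lemma ex_induced_proj: "\<exists>F. \<forall>w. F (cls N w) = cls K (P w)"
proof (rule ex_map_on_cls)
  fix x y assume "cls N x = cls N y"
  then have "P x - P y \<in> K"
    by (metis cls_nsub_eq_iff proj_nsub additive.diff[OF additive_proj])
  then show "cls K (P x) = cls K (P y)" by (simp add: cls_qsub_eq_iff)
qed

lemma cls_nsub_eq_of_mem_cls_proj: "x \<in> cls K (P w) \<Longrightarrow> cls N x = cls N w"
proof -
  assume "x \<in> cls K (P w)"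
  then have "x - P w \<in> K" by (simp add: cls_def)
  then have "x - P w \<in> N" by (rule nsub.base)
  then have "(x - P w) - (w - P w) \<in> N" using diff_proj_nsub nsub_diff by blast
  then show ?thesis by (simp add: cls_nsub_eq_iff)
qed

lemma bij_betw_induced_proj:
  assumes F: "\<And>w. F (cls N w) = cls K (P w)"
  shows "bij_betw F (range (cls N)) (range (\<lambda>w. cls K (P w)))"
proof (rule bij_betw_imageI)
  show "inj_on F (range (cls N))"
  proof (rule inj_onI)
    fix S T assume "S \<in> range (cls N)" "T \<in> range (cls N)" and FST: "F S = F T"
    then obtain w w' where S: "S = cls N w" and T: "T = cls N w'" by blast
    have "P w \<in> cls K (P w)" by (simp add: cls_def qsub.zero)
    moreover from this have "P w \<in> cls K (P w')" using FST by (simp add: S T F)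
    ultimately show "S = T" using cls_nsub_eq_of_mem_cls_proj S T by metis
  qed
  show "F ` range (cls N) = range (\<lambda>w. cls K (P w))"
    by (simp add: image_image F)
qed

end

theorem proposition3p5:
  fixes sc :: "complex \<Rightarrow> 'a::ring_1"
    and lact :: "'a \<Rightarrow> 'm::ab_group_add \<Rightarrow> 'm" and ract :: "'m \<Rightarrow> 'a \<Rightarrow> 'm"
    and d :: "'a \<Rightarrow> 'm"
    and gs :: "('m \<times> 'm) list" and G :: "'m \<Rightarrow> 'm \<Rightarrow> 'a"
    and nabla :: "'m \<Rightarrow> ('m \<times> 'm) list" and sigma :: "'m \<Rightarrow> 'm \<Rightarrow> ('m \<times> 'm) list"
    and I :: "'a set" and \<nu> :: 'm
  assumes "cplx_algebra sc"
    and "diff_calculus sc lact ract d"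
    and "riemannian_structure sc lact ract d gs G nabla sigma"
    and "two_sided_ideal I"
    and "nc_hypersurface I lact ract d G \<nu>"
  defines "K \<equiv> qsub I lact ract" and "N \<equiv> nsub I lact ract d" and "P \<equiv> proj lact G \<nu>"
  shows "cls K (P \<nu>) = cls K 0
    \<and> (\<forall>w. cls K (P (P w)) = cls K (P w))
    \<and> (\<exists>F. (\<forall>w. F (cls N w) = cls K (P w))
         \<and> (\<forall>w w'. F (cls N (w + w')) = cls K (P w + P w'))
         \<and> (\<forall>a b w. F (cls N (lact a (ract w b))) = cls K (lact a (ract (P w) b)))
         \<and> (\<forall>w x. x \<in> F (cls N w) \<longrightarrow> cls N x = cls N w)
         \<and> bij_betw F (range (cls N)) (range (\<lambda>w. cls K (P w))))"
proof -
  interpret hypersurface_projection sc lact ract I d G \<nu>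
  proof
    show "bimodule sc lact ract" using assms(2) by (simp add: diff_calculus_def)
    show "bimod_pairing lact ract G"
      using assms(3) by (simp add: riemannian_structure_def gen_metric_def)
  qed (use assms(4,5) in auto)
  obtain F where F: "\<And>w. F (cls N w) = cls K (P w)"
    using ex_induced_proj unfolding K_def N_def P_def by blast
  then show ?thesis
    unfolding K_def N_def P_def
    by (intro conjI exI[of _ F] allI impI)
      (simp_all add: F cls_proj_nu cls_proj_proj cls_nsub_eq_of_mem_cls_proj bij_betw_induced_proj
        additive.add[OF additive_proj] proj_bimodule_map)
qed

end
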